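(* Let $\eta_3=\int_1^\infty\frac{\mathrm{d}t}{\sqrt{t^6-1}}$ and let $\mathrm{cleafh}_3:(-\eta_3,\eta_3)\to\mathbb{R}$ be the hyperbolic leaf function of basis $3$. For every $l\in(-\eta_3,\eta_3)$, writing $C=\mathrm{cleafh}_3(l)$, $$\Bigl(\mathrm{cleafh}_3\Bigl(\frac l2\Bigr)\Bigr)^2=\frac{-1+C^2+\sqrt3\sqrt{1+C^2+C^4}}{4C^2+2}+\frac{\sqrt3\,C\sqrt{-3-6C^2+2\sqrt3\,(1+2C^2)\sqrt{1+C^2+C^4}}}{2(1+2C^2)^{3/2}}.$$
   Context: For a natural number $n$, let $\eta_n=\int_1^\infty\frac{\mathrm{d}t}{\sqrt{t^{2n}-1}}$. The hyperbolic leaf function $\mathrm{cleafh}_n$ is the solution $r(l)$ on $(-\eta_n,\eta_n)$ of $\frac{\mathrm{d}^2r}{\mathrm{d}l^2}=n\,r^{2n-1}$ with $r(0)=1$, $r'(0)=0$; it is even, and for $l\ge0$ it is the inverse of $r\mapsto\int_1^r\frac{\mathrm{d}t}{\sqrt{t^{2n}-1}}$, $r\ge1$. *)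

theory Defs
  imports "HOL-Analysis.Analysis"
begin

definition eta :: "nat \<Rightarrow> real" where
  "eta n = (LBINT t=ereal 1..\<infinity>. 1 / sqrt (t ^ (2*n) - 1))"

definition cleafh :: "nat \<Rightarrow> real \<Rightarrow> real" where
  "cleafh n l = (THE r. r \<ge> 1 \<and>
      (LBINT t=ereal 1..ereal r. 1 / sqrt (t ^ (2*n) - 1)) = \<bar>l\<bar>)"

end

theory Submission
  imports Defs
begin

(* The substitution t = sqrt w turns the integral defining cleafh 3 into the elliptic integral
   of dw / (2 sqrt (w^4 - w)). A rational doubling map w \<mapsto> dup_map w of the curve
   y^2 = w^4 - w doubles this integral, so (cleafh 3 (l/2))^2 is the solution v \<ge> 1 of
   dup_map v = (cleafh 3 l)^2. With C = cleafh 3 l this is a quartic equation in v which splits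
   into two quadratic factors over the field generated by sqrt 3 and sqrt (1 + C^2 + C^4);
   the stated formula is the larger root of one of them. *)

definition ell_integrand :: "real \<Rightarrow> real" where
  "ell_integrand v = 1 / sqrt ((1 + v^2) * ((1 + v^2)^2 + (1 + v^2) + 1))"

(* ell u is the integral from 1 to u of dw / (2 sqrt (w^4 - w)), written with w = 1 + v^2 to remove
   the singularity at w = 1; the lower limit -1 only serves to make the indefinite integral
   differentiable at v = 0. *)
definition ell :: "real \<Rightarrow> real" where
  "ell u = integral {-1..sqrt (u - 1)} ell_integrand - integral {-1..0} ell_integrand"

lemma continuous_on_ell_integrand: "continuous_on S ell_integrand"
proof -
  have "0 < (1 + v^2) * ((1 + v^2)^2 + (1 + v^2) + 1)" for v :: real
    by (intro mult_pos_pos) (simp_all add: add_pos_nonneg)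
  then have "sqrt ((1 + v^2) * ((1 + v^2)^2 + (1 + v^2) + 1)) \<noteq> 0" for v :: real
    by (metis real_sqrt_eq_zero_cancel_iff less_irrefl)
  then show ?thesis
    unfolding ell_integrand_def by (intro continuous_intros) auto
qed

lemma integral_has_real_derivative_at:
  assumes "continuous_on UNIV f" and "a < t"
  shows "((\<lambda>x. integral {a..x} f) has_real_derivative f t) (at t)"
proof -
  have "((\<lambda>x. integral {a..x} f) has_real_derivative f t) (at t within {a..t + 1})"
    using assms by (intro integral_has_real_derivative) (auto intro: continuous_on_subset)
  moreover have "at t within {a..t + 1} = at t"
    using assms by (intro at_within_Icc_at) auto
  ultimately show ?thesis by simp
qed

lemma ell_1: "ell 1 = 0"
  by (simp add: ell_def)

lemma isCont_ell:
  assumes "0 < u"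
  shows "isCont ell u"
proof -
  have "-1 < sqrt (u - 1)"
    using assms real_sqrt_less_iff[of "-1" "u - 1"] by (simp add: real_sqrt_minus)
  then have "isCont (\<lambda>y. integral {-1..y} ell_integrand) (sqrt (u - 1))"
    using integral_has_real_derivative_at[OF continuous_on_ell_integrand] DERIV_isCont by blast
  moreover have "isCont (\<lambda>u. sqrt (u - 1)) u"
    by (intro continuous_intros)
  ultimately show ?thesis
    unfolding ell_def using isCont_o2 by (intro continuous_intros) blast
qed

lemma ell_has_real_derivative:
  assumes "1 < u"
  shows "(ell has_real_derivative 1 / (2 * sqrt (u^4 - u))) (at u)"
proof -
  define s where "s = sqrt (u - 1)"
  have s: "0 < s" "s^2 = u - 1"
    using assms by (simp_all add: s_def)
  have "((\<lambda>u. integral {-1..sqrt (u - 1)} ell_integrand) has_real_derivative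
          ell_integrand s * (inverse s / 2)) (at u)"
    unfolding s_def
  proof (rule DERIV_chain2[OF integral_has_real_derivative_at[OF continuous_on_ell_integrand]])
    show "-1 < sqrt (u - 1)" using s(1) unfolding s_def by linarith
    show "((\<lambda>u. sqrt (u - 1)) has_real_derivative inverse (sqrt (u - 1)) / 2) (at u)"
      using s by (auto simp: s_def intro!: derivative_eq_intros)
  qed
  moreover have "ell_integrand s * (inverse s / 2) = 1 / (2 * sqrt (u^4 - u))"
  proof -
    have "u^4 - u = s^2 * (u * (u^2 + u + 1))"
      unfolding s(2) by (simp add: algebra_simps power2_eq_square power4_eq_xxxx)
    then have "sqrt (u^4 - u) = s * sqrt (u * (u^2 + u + 1))"
      using s(1) by (simp add: real_sqrt_mult)
    moreover have "ell_integrand s = 1 / sqrt (u * (u^2 + u + 1))"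
      unfolding ell_integrand_def s by (simp add: power2_eq_square)
    ultimately show ?thesis
      using s by (simp add: field_simps)
  qed
  ultimately have "((\<lambda>u. integral {-1..sqrt (u - 1)} ell_integrand - integral {-1..0} ell_integrand)
      has_real_derivative 1 / (2 * sqrt (u^4 - u)) - 0) (at u)"
    by (intro DERIV_diff DERIV_const) (simp only:)
  then show ?thesis
    unfolding ell_def[abs_def] by simp
qed

lemma power4_gt_self: "1 < (t::real) \<Longrightarrow> t < t^4"
  using power_strict_increasing[of 1 4 t] by simp

lemma strict_mono_on_ell: "strict_mono_on {1..} ell"
proof (rule strict_mono_onI)
  fix x y :: real
  assume x: "x \<in> {1..}" and "x < y"
  show "ell x < ell y"
  proof (rule DERIV_pos_imp_increasing_open[OF \<open>x < y\<close>])
    fix t assume t: "x < t" "t < y"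
    with x have "1 < t" by simp
    then have "0 < sqrt (t^4 - t)"
      using power4_gt_self by simp
    then have "0 < 1 / (2 * sqrt (t^4 - t))"
      by (intro divide_pos_pos mult_pos_pos) simp_all
    with ell_has_real_derivative[OF \<open>1 < t\<close>]
    show "\<exists>d. (ell has_real_derivative d) (at t) \<and> 0 < d"
      by blast
  next
    show "continuous_on {x..y} ell"
      using x by (intro continuous_at_imp_continuous_on ballI isCont_ell) auto
  qed
qed

lemma isCont_ell_square:
  assumes "t \<noteq> 0"
  shows "isCont (\<lambda>t. ell (t^2)) t"
proof (rule isCont_o2[where f = "\<lambda>t. t^2"])
  show "isCont ell (t^2)"
    using assms by (intro isCont_ell) simp
qed (intro continuous_intros)

lemma has_real_derivative_ell_square:
  assumes "1 < t"
  shows "((\<lambda>t. ell (t^2)) has_real_derivative 1 / sqrt (t ^ (2*3) - 1)) (at t)"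
proof -
  have "1 < t^2"
    using assms by (simp add: one_less_power)
  then have "((\<lambda>t. ell (t^2)) has_real_derivative 1 / (2 * sqrt ((t^2)^4 - t^2)) * (2 * t)) (at t)"
    by (intro DERIV_chain2[OF ell_has_real_derivative]) (auto intro!: derivative_eq_intros)
  moreover have "(t^2)^4 - t^2 = t^2 * (t ^ (2*3) - 1)"
    by (simp add: algebra_simps eval_nat_numeral)
  then have "sqrt ((t^2)^4 - t^2) = t * sqrt (t ^ (2*3) - 1)"
    using assms by (simp add: real_sqrt_mult)
  ultimately show ?thesis
    using assms by simp
qed

lemma interval_integral_sextic:
  assumes "ereal 1 < b"
    and "(((\<lambda>t. ell (t^2)) \<circ> real_of_ereal) \<longlongrightarrow> L) (at_left b)"
  shows "(LBINT t=ereal 1..b. 1 / sqrt (t ^ (2*3) - 1)) = L"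
proof -
  have "(LBINT t=ereal 1..b. 1 / sqrt (t ^ (2*3) - 1)) = L - ell (1^2)"
  proof (rule interval_integral_FTC_nonneg[OF assms(1)])
    fix x assume "ereal 1 < ereal x"
    then have "1 < x" by simp
    then show "((\<lambda>t. ell (t^2)) has_real_derivative 1 / sqrt (x ^ (2*3) - 1)) (at x)"
      by (rule has_real_derivative_ell_square)
    have "1 < x ^ (2*3)"
      using \<open>1 < x\<close> by (simp add: one_less_power)
    then show "isCont (\<lambda>t. 1 / sqrt (t ^ (2*3) - 1)) x"
      by (intro continuous_intros) auto
  next
    show "AE x in lborel. ereal 1 < ereal x \<longrightarrow> ereal x < b \<longrightarrow> 0 \<le> 1 / sqrt (x ^ (2*3) - 1)"
      by (intro AE_I2 impI) (simp add: one_le_power)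
    have "((\<lambda>t. ell (t^2)) \<longlongrightarrow> ell (1^2)) (at 1)"
      using isCont_ell_square[of 1] by (simp add: isCont_def)
    then show "(((\<lambda>t. ell (t^2)) \<circ> real_of_ereal) \<longlongrightarrow> ell (1^2)) (at_right (ereal 1))"
      unfolding ereal_tendsto_simps1 by (rule Lim_at_imp_Lim_at_within)
  qed (fact assms(2))
  then show ?thesis
    by (simp add: ell_1)
qed

lemma interval_integral_sextic_eq_ell:
  assumes "1 \<le> r"
  shows "(LBINT t=ereal 1..ereal r. 1 / sqrt (t ^ (2*3) - 1)) = ell (r^2)"
proof (cases "r = 1")
  case True
  then show ?thesis by (simp add: ell_1)
next
  case False
  with assms have "1 < r" by simp
  then have "((\<lambda>t. ell (t^2)) \<longlongrightarrow> ell (r^2)) (at r)"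
    using isCont_ell_square[of r] by (simp add: isCont_def)
  then have "(((\<lambda>t. ell (t^2)) \<circ> real_of_ereal) \<longlongrightarrow> ell (r^2)) (at_left (ereal r))"
    unfolding ereal_tendsto_simps1 by (rule Lim_at_imp_Lim_at_within)
  with \<open>1 < r\<close> show ?thesis
    by (intro interval_integral_sextic) simp_all
qed

lemma ell_square_mono:
  assumes "1 \<le> s" "s \<le> t"
  shows "ell (s^2) \<le> ell (t^2)"
  using assms by (intro strict_mono_on_leD[OF strict_mono_on_ell] power_mono) (auto simp: one_le_power)

lemma exists_ell_square_gt:
  assumes "a < eta 3"
  shows "\<exists>R\<ge>1. a < ell (R^2)"
proof (rule ccontr)
  assume "\<not> ?thesis"
  then have bound: "ell (R^2) \<le> a" if "1 \<le> R" for R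
    using that by (simp add: not_less)
  define L where "L = (SUP R\<in>{1..}. ell (R^2))"
  have bdd: "bdd_above ((\<lambda>R. ell (R^2)) ` {1..})"
    using bound by (auto intro!: bdd_aboveI)
  have "L \<le> a"
    unfolding L_def using bound by (intro cSup_least) auto
  have "((\<lambda>R. ell (R^2)) \<longlongrightarrow> L) at_top"
  proof (rule increasing_tendsto)
    show "\<forall>\<^sub>F R in at_top. ell (R^2) \<le> L"
      unfolding L_def eventually_at_top_linorder using bdd by (auto intro!: cSUP_upper)
  next
    fix y assume "y < L"
    then obtain R0 where "1 \<le> R0" "y < ell (R0^2)"
      unfolding L_def using less_cSUP_iff[OF _ bdd] by auto
    then show "\<forall>\<^sub>F R in at_top. y < ell (R^2)"
      unfolding eventually_at_top_linorder
      using ell_square_mono by (intro exI[of _ R0]) (auto intro: less_le_trans)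
  qed
  then have "eta 3 = L"
    unfolding eta_def by (intro interval_integral_sextic) (simp_all add: ereal_tendsto_simps1)
  with assms \<open>L \<le> a\<close> show False by simp
qed

lemma cleafh3_eqI:
  assumes "1 \<le> C" "ell (C^2) = \<bar>l\<bar>"
  shows "cleafh 3 l = C"
  unfolding cleafh_def
proof (rule the_equality)
  show "1 \<le> C \<and> (LBINT t=ereal 1..ereal C. 1 / sqrt (t ^ (2*3) - 1)) = \<bar>l\<bar>"
    using assms interval_integral_sextic_eq_ell[OF assms(1)] by simp
next
  fix r assume r: "1 \<le> r \<and> (LBINT t=ereal 1..ereal r. 1 / sqrt (t ^ (2*3) - 1)) = \<bar>l\<bar>"
  then have "ell (C^2) = ell (r^2)"
    using assms(2) interval_integral_sextic_eq_ell[of r] by simp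
  moreover have "C^2 \<in> {1..}" "r^2 \<in> {1..}"
    using r assms by (simp_all add: one_le_power)
  ultimately have "r^2 = C^2"
    by (rule strict_mono_on_eqD[OF strict_mono_on_ell])
  then show "r = C"
    using r assms by (simp add: power2_eq_iff_nonneg)
qed

lemma cleafh3_spec:
  assumes "\<bar>l\<bar> < eta 3"
  shows "1 \<le> cleafh 3 l" and "ell ((cleafh 3 l)^2) = \<bar>l\<bar>"
proof -
  obtain R where "1 \<le> R" "\<bar>l\<bar> < ell (R^2)"
    using exists_ell_square_gt[OF assms] by blast
  moreover have "continuous_on {1..R} (\<lambda>t. ell (t^2))"
    by (intro continuous_at_imp_continuous_on ballI isCont_ell_square) auto
  ultimately obtain C where "1 \<le> C" "ell (C^2) = \<bar>l\<bar>"
    using IVT'[of "\<lambda>t. ell (t^2)" 1 "\<bar>l\<bar>" R] by (auto simp: ell_1)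
  moreover from this have "cleafh 3 l = C"
    by (rule cleafh3_eqI)
  ultimately show "1 \<le> cleafh 3 l" and "ell ((cleafh 3 l)^2) = \<bar>l\<bar>"
    by simp_all
qed

definition dup_num :: "real \<Rightarrow> real" where
  "dup_num x = 4*x^4 + 8*x^3 - 4*x + 1"

definition dup_den :: "real \<Rightarrow> real" where
  "dup_den x = -8*x^4 + 8*x^3 + 8*x + 1"

definition dup_map :: "real \<Rightarrow> real" where
  "dup_map x = dup_num x / dup_den x"

lemma dup_map_1: "dup_map 1 = 1"
  by (simp add: dup_map_def dup_num_def dup_den_def)

lemma dup_den_antimono:
  assumes "1 \<le> x" "x \<le> y"
  shows "dup_den y \<le> dup_den x"
proof -
  have "dup_den x - dup_den y = 8 * (y - x) * ((x^3 - x^2) + (x^2*y - x*y) + (x*y^2 - y^2) + (y^3 - 1))"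
    unfolding dup_den_def by algebra
  moreover have "x^2 \<le> x^3" "x*y \<le> x^2*y" "y^2 \<le> x*y^2" "1 \<le> y^3"
    using assms power_increasing[of 2 3 x] by (simp_all add: power2_eq_square)
  then have "0 \<le> (x^3 - x^2) + (x^2*y - x*y) + (x*y^2 - y^2) + (y^3 - 1)"
    by linarith
  ultimately show ?thesis
    using assms by (smt (verit) mult_nonneg_nonneg)
qed

lemma dup_num_pos:
  assumes "1 \<le> x"
  shows "0 < dup_num x"
proof -
  have "4*x \<le> 4*x^4" "0 \<le> x^3"
    using assms power_increasing[of 1 4 x] by simp_all
  then show ?thesis
    unfolding dup_num_def by linarith
qed

lemma dup_num_minus_dup_den: "dup_num x - dup_den x = 12 * x * (x^3 - 1)"
  unfolding dup_num_def dup_den_def by algebra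

lemma one_le_dup_map:
  assumes "1 \<le> x" "0 < dup_den x"
  shows "1 \<le> dup_map x"
proof -
  have "0 \<le> 12 * x * (x^3 - 1)"
    using assms by simp
  then have "dup_den x \<le> dup_num x"
    using dup_num_minus_dup_den[of x] by linarith
  then show ?thesis
    using assms by (simp add: dup_map_def)
qed

lemma one_less_dup_map:
  assumes "1 < x" "0 < dup_den x"
  shows "1 < dup_map x"
proof -
  have "0 < 12 * x * (x^3 - 1)"
    using assms by (simp add: one_less_power)
  then have "dup_den x < dup_num x"
    using dup_num_minus_dup_den[of x] by linarith
  then show ?thesis
    using assms by (simp add: dup_map_def)
qed

lemma dup_map_has_real_derivative:
  assumes "dup_den x \<noteq> 0"
  shows "(dup_map has_real_derivative 12 * (8*x^6 + 20*x^3 - 1) / (dup_den x)^2) (at x)"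
proof -
  have "(dup_map has_real_derivative
      ((16*x^3 + 24*x^2 - 4) * dup_den x - dup_num x * (-32*x^3 + 24*x^2 + 8)) / (dup_den x * dup_den x)) (at x)"
    unfolding dup_map_def[abs_def] using assms
    by (intro DERIV_divide) (auto simp: dup_num_def dup_den_def intro!: derivative_eq_intros)
  moreover have "(16*x^3 + 24*x^2 - 4) * dup_den x - dup_num x * (-32*x^3 + 24*x^2 + 8)
      = 12 * (8*x^6 + 20*x^3 - 1)"
    unfolding dup_num_def dup_den_def by algebra
  ultimately show ?thesis
    by (simp add: power2_eq_square)
qed

(* With j the factor squared on the right, (w, y) \<mapsto> (dup_map w, j y) maps the curve y^2 = w^4 - w
   to itself; as the derivative of dup_map is 2 j, it doubles the differential dw / y. *)
lemma dup_map_quartic: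
  assumes "dup_den x \<noteq> 0"
  shows "(dup_map x)^4 - dup_map x = (x^4 - x) * (6 * (8*x^6 + 20*x^3 - 1) / (dup_den x)^2)^2"
proof -
  define m where "m = 8*x^6 + 20*x^3 - 1"
  define q where "q = 36*(1 + 4*x + 16*x^2 + 16*x^3 + 28*x^4 - 32*x^5 + 64*x^6 - 32*x^7 + 16*x^8)"
  have cube: "dup_num x ^ 3 - dup_den x ^ 3 = (x^4 - x) * q"
    unfolding dup_num_def dup_den_def q_def by algebra
  have square: "(12 * m)^2 = 4 * dup_num x * q"
    unfolding dup_num_def q_def m_def by algebra
  have "(dup_map x)^4 - dup_map x = dup_num x * (dup_num x ^ 3 - dup_den x ^ 3) / (dup_den x)^4"
    unfolding dup_map_def using assms by (simp add: field_simps eval_nat_numeral)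
  also have "\<dots> = (x^4 - x) * (4 * dup_num x * q) / (4 * (dup_den x)^4)"
    by (simp add: cube)
  also have "\<dots> = (x^4 - x) * (6 * m / (dup_den x)^2)^2"
    unfolding square[symmetric] using assms by (simp add: power_divide power_mult_distrib flip: power_mult)
  finally show ?thesis
    by (simp add: m_def)
qed

lemma ell_dup_map_has_real_derivative:
  assumes "1 < x" "0 < dup_den x"
  shows "((\<lambda>x. ell (dup_map x)) has_real_derivative 2 * (1 / (2 * sqrt (x^4 - x)))) (at x)"
proof -
  define j where "j = 6 * (8*x^6 + 20*x^3 - 1) / (dup_den x)^2"
  have "1 \<le> x^6" "1 \<le> x^3"
    using assms by simp_all
  then have "0 < j"
    unfolding j_def using assms(2) by (intro divide_pos_pos) simp_all
  have "0 < x^4 - x"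
    using power4_gt_self[OF \<open>1 < x\<close>] by simp
  have "(dup_map has_real_derivative 2 * j) (at x)"
    using dup_map_has_real_derivative[of x] assms by (simp add: j_def)
  then have "((\<lambda>x. ell (dup_map x)) has_real_derivative
      1 / (2 * sqrt (dup_map x ^ 4 - dup_map x)) * (2 * j)) (at x)"
    by (rule DERIV_chain2[where g = dup_map, OF ell_has_real_derivative[OF one_less_dup_map[OF assms]]])
  moreover have "dup_map x ^ 4 - dup_map x = (x^4 - x) * j^2"
    using dup_map_quartic[of x] assms by (simp add: j_def)
  then have "sqrt (dup_map x ^ 4 - dup_map x) = sqrt (x^4 - x) * j"
    using \<open>0 < j\<close> by (simp add: real_sqrt_mult)
  ultimately show ?thesis
    using \<open>0 < j\<close> \<open>0 < x^4 - x\<close> by (simp add: field_simps)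
qed

lemma ell_dup_map:
  assumes "1 \<le> u" "0 < dup_den u"
  shows "ell (dup_map u) = 2 * ell u"
proof (cases "u = 1")
  case True
  then show ?thesis by (simp add: dup_map_1 ell_1)
next
  case False
  with assms have "1 < u" by simp
  have den_pos: "0 < dup_den x" if "1 \<le> x" "x \<le> u" for x
    using dup_den_antimono[OF that] assms by simp
  define h where "h = (\<lambda>x. ell (dup_map x) - 2 * ell x)"
  have "h u = h 1"
  proof (rule DERIV_isconst_end[OF \<open>1 < u\<close>])
    show "continuous_on {1..u} h"
    proof (intro continuous_at_imp_continuous_on ballI)
      fix x assume x: "x \<in> {1..u}"
      then have "0 < dup_den x"
        using den_pos by simp
      then have "isCont dup_map x" "1 \<le> dup_map x"
        using x DERIV_isCont[OF dup_map_has_real_derivative] one_le_dup_map by auto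
      then have "isCont dup_map x" "isCont ell (dup_map x)" "isCont ell x"
        using x isCont_ell by auto
      then show "isCont h x"
        unfolding h_def by (intro continuous_intros isCont_o2[where f = dup_map and g = ell])
    qed
  next
    fix x assume "1 < x" "x < u"
    then have "(h has_real_derivative 2 * (1 / (2 * sqrt (x^4 - x))) - 2 * (1 / (2 * sqrt (x^4 - x)))) (at x)"
      unfolding h_def using den_pos
      by (intro DERIV_diff DERIV_cmult ell_dup_map_has_real_derivative ell_has_real_derivative) auto
    then show "(h has_real_derivative 0) (at x)"
      by simp
  qed
  then show ?thesis
    by (simp add: h_def dup_map_1 ell_1)
qed

lemma dup_quartic_factorization:
  fixes X s v :: real
  assumes "s^2 = 3 * (1 + X + X^2)"
  shows "4 * (1 + 2 * X)^3 * (dup_num v - X * dup_den v)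
    = ((2 * (1 + 2 * X) * v - (X - 1 + s))^2 - 3 * X * (2 * s - 3))
      * ((2 * (1 + 2 * X) * v - (X - 1 - s))^2 + 3 * X * (2 * s + 3))"
  using assms unfolding dup_num_def dup_den_def by algebra

definition dup_inverse :: "real \<Rightarrow> real" where
  "dup_inverse X = (let s = sqrt 3 * sqrt (1 + X + X^2)
     in (X - 1 + s + sqrt (3 * X * (2 * s - 3))) / (2 * (1 + 2 * X)))"

lemma dup_inverse_root:
  assumes "1 \<le> X"
  shows "1 \<le> dup_inverse X" and "dup_num (dup_inverse X) = X * dup_den (dup_inverse X)"
proof -
  define s where "s = sqrt 3 * sqrt (1 + X + X^2)"
  define r where "r = sqrt (3 * X * (2 * s - 3))"
  define W where "W = 1 + 2 * X"
  have v: "dup_inverse X = (X - 1 + s + r) / (2 * W)"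
    unfolding dup_inverse_def s_def r_def W_def Let_def ..
  have "0 < W"
    using assms by (simp add: W_def)
  have s2: "s^2 = 3 * (1 + X + X^2)"
    using assms by (simp add: s_def power_mult_distrib add_nonneg_nonneg)
  have "X + 2 \<le> s"
  proof (rule power2_le_imp_le)
    have "0 \<le> (X - 1) * (2 * X + 1)"
      using assms by simp
    then show "(X + 2)^2 \<le> s^2"
      unfolding s2 by (simp add: power2_eq_square algebra_simps)
  qed (use assms in \<open>simp add: s_def\<close>)
  then have r2: "r^2 = 3 * X * (2 * s - 3)"
    using assms by (simp add: r_def)
  have "2 * W * dup_inverse X - (X - 1 + s) = r"
    unfolding v using \<open>0 < W\<close> by simp
  then have "4 * W^3 * (dup_num (dup_inverse X) - X * dup_den (dup_inverse X)) = 0"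
    using dup_quartic_factorization[OF s2, of "dup_inverse X"] r2 unfolding W_def by simp
  then show "dup_num (dup_inverse X) = X * dup_den (dup_inverse X)"
    using \<open>0 < W\<close> by simp
  have "3 * X + 3 - s \<le> r"
  proof (rule power2_le_imp_le)
    have "r^2 - (3 * X + 3 - s)^2 = 6 * W * (s - X - 2)"
      unfolding r2 W_def using s2 by algebra
    moreover have "0 \<le> 6 * W * (s - X - 2)"
      using \<open>0 < W\<close> \<open>X + 2 \<le> s\<close> by simp
    ultimately show "(3 * X + 3 - s)^2 \<le> r^2"
      by linarith
  qed (use assms \<open>X + 2 \<le> s\<close> in \<open>simp add: r_def\<close>)
  then show "1 \<le> dup_inverse X"
    unfolding v using \<open>0 < W\<close> by (simp add: W_def)
qed

lemma closed_form_eq_dup_inverse: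
  fixes C :: real
  assumes "0 \<le> C"
  shows "(-1 + C^2 + sqrt 3 * sqrt (1 + C^2 + C^4)) / (4 * C^2 + 2)
      + sqrt 3 * C * sqrt (-3 - 6 * C^2 + 2 * sqrt 3 * (1 + 2 * C^2) * sqrt (1 + C^2 + C^4))
        / (2 * (1 + 2 * C^2) powr (3/2))
    = dup_inverse (C^2)" (is "?lhs = _")
proof -
  define s where "s = sqrt 3 * sqrt (1 + C^2 + (C^2)^2)"
  define W where "W = 1 + 2 * C^2"
  have "0 < W"
    by (simp add: W_def add_pos_nonneg)
  have "3/2 \<le> s"
  proof (rule power2_le_imp_le)
    have "s^2 = 3 * (1 + C^2 + (C^2)^2)"
      by (simp add: s_def power_mult_distrib add_nonneg_nonneg)
    moreover have "0 \<le> C^2 + (C^2)^2"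
      by simp
    ultimately have "9/4 \<le> s^2"
      by simp
    then show "(3/2)^2 \<le> s^2"
      by (simp add: power_divide)
  qed (simp add: s_def add_nonneg_nonneg)
  have numerator: "-1 + C^2 + sqrt 3 * sqrt (1 + C^2 + C^4) = C^2 - 1 + s"
    by (simp add: s_def flip: power_mult)
  have denominator: "4 * C^2 + 2 = 2 * W"
    by (simp add: W_def)
  have radicand: "sqrt (-3 - 6 * C^2 + 2 * sqrt 3 * (1 + 2 * C^2) * sqrt (1 + C^2 + C^4))
      = sqrt W * sqrt (2 * s - 3)"
    unfolding s_def W_def by (simp add: real_sqrt_mult[symmetric] algebra_simps flip: power_mult)
  have power: "(1 + 2 * C^2) powr (3/2) = W * sqrt W"
    using \<open>0 < W\<close> powr_add[of W 1 "1/2"] by (simp add: W_def powr_half_sqrt)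
  have "?lhs = (C^2 - 1 + s) / (2 * W) + sqrt 3 * C * (sqrt W * sqrt (2 * s - 3)) / (2 * (W * sqrt W))"
    unfolding numerator denominator radicand power ..
  also have "\<dots> = (C^2 - 1 + s) / (2 * W) + sqrt 3 * C * sqrt (2 * s - 3) / (2 * W)"
    using \<open>0 < W\<close> by simp
  also have "\<dots> = (C^2 - 1 + s + sqrt (3 * C^2 * (2 * s - 3))) / (2 * W)"
    using assms by (simp add: real_sqrt_mult add_divide_distrib)
  also have "\<dots> = dup_inverse (C^2)"
    unfolding dup_inverse_def Let_def s_def W_def by simp
  finally show ?thesis .
qed

theorem mainTheorem17:
  fixes l :: real
  assumes "l \<in> {- eta 3<..<eta 3}"
  shows "(cleafh 3 (l/2))^2 =
      (-1 + (cleafh 3 l)^2 + sqrt 3 * sqrt (1 + (cleafh 3 l)^2 + (cleafh 3 l)^4))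
        / (4 * (cleafh 3 l)^2 + 2)
    + sqrt 3 * cleafh 3 l
        * sqrt (-3 - 6 * (cleafh 3 l)^2 + 2 * sqrt 3 * (1 + 2 * (cleafh 3 l)^2)
                  * sqrt (1 + (cleafh 3 l)^2 + (cleafh 3 l)^4))
        / (2 * (1 + 2 * (cleafh 3 l)^2) powr (3/2))"
proof -
  define C where "C = cleafh 3 l"
  have "\<bar>l\<bar> < eta 3"
    using assms by auto
  then have "1 \<le> C" and ell_C: "ell (C^2) = \<bar>l\<bar>"
    unfolding C_def by (rule cleafh3_spec)+
  define v where "v = dup_inverse (C^2)"
  have "1 \<le> v" and v_root: "dup_num v = C^2 * dup_den v"
    unfolding v_def using \<open>1 \<le> C\<close> by (simp_all add: dup_inverse_root one_le_power)
  then have "0 < dup_den v"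
    using dup_num_pos[OF \<open>1 \<le> v\<close>] \<open>1 \<le> C\<close> by (simp add: zero_less_mult_iff)
  then have "dup_map v = C^2"
    using v_root by (simp add: dup_map_def)
  then have "ell ((sqrt v)^2) = \<bar>l/2\<bar>"
    using ell_dup_map[OF \<open>1 \<le> v\<close> \<open>0 < dup_den v\<close>] ell_C \<open>1 \<le> v\<close> by simp
  then have "cleafh 3 (l/2) = sqrt v"
    using \<open>1 \<le> v\<close> by (intro cleafh3_eqI) simp_all
  then show ?thesis
    using \<open>1 \<le> v\<close> \<open>1 \<le> C\<close> closed_form_eq_dup_inverse[of C] by (simp add: v_def C_def)
qed

end
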